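(* Let $T$ be a first-order theory over a function-free vocabulary $\Sigma$, let $O$ be a propagator for $T$, and let $D$ be a finite set. Let $\mathcal{K}$ be the class of CSPs of the form $\langle \{C_T\}, V_{\tilde I}, \mathit{dom}_{\tilde I}\rangle$ where $\tilde I$ ranges over four-valued $\Sigma$-structures with domain $D$. Then the operator $f$ on $\mathcal{K}$ defined by $f(\langle \{C_T\}, V_{\tilde I}, \mathit{dom}_{\tilde I}\rangle) = \langle \{C_T\}, V_{\tilde I}, \mathit{dom}_{O(\tilde I)}\rangle$ is a domain reducing propagator.
   Context: Vocabularies are finite sets of predicate symbols with arities. Truth values: $\mathbf{t}$ (true), $\mathbf{f}$ (false), $\mathbf{u}$ (unknown), $\mathbf{i}$ (inconsistent). The precision order $\le_p$ on truth values: $\mathbf{u} \le_p \mathbf{t} \le_p \mathbf{i}$ and $\mathbf{u} \le_p \mathbf{f} \le_p \mathbf{i}$, with $\mathbf{t},\mathbf{f}$ incomparable. A four-valued $\Sigma$-structure $\tilde I$ consists of a domain $D$ and, for each $P/n \in \Sigma$, a function $P^{\tilde I}: D^n \to \{\mathbf{t},\mathbf{f},\mathbf{u},\mathbf{i}\}$; it is two-valued if it only uses $\mathbf{t},\mathbf{f}$, and two-valued structures are identified with ordinary first-order structures ($\overline{d} \in P^I$ iff $P^I(\overline{d})=\mathbf{t}$). For structures with the same domain, $\tilde I \le_p \tilde J$ iff $P^{\tilde I}(\overline{d}) \le_p P^{\tilde J}(\overline{d})$ for all $P,\overline{d}$. A propagator for a theory $T$ over $\Sigma$ is a map $O$ from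 four-valued $\Sigma$-structures to four-valued $\Sigma$-structures such that (i) $\tilde I \le_p O(\tilde I)$ for every $\tilde I$ (in particular $O(\tilde I)$ has the same domain), and (ii) for every two-valued model $M$ of $T$ with $\tilde I \le_p M$, also $O(\tilde I) \le_p M$. CSPs: a constraint on a sequence of variables $(v_1,\dots,v_n)$ is a set of $n$-tuples. A CSP is a tuple $\langle \mathcal{C}, V, \mathit{dom}\rangle$ with $V$ a set of (constraint) variables, $\mathit{dom}$ mapping each variable to a domain, and $\mathcal{C}$ a set of constraints on finite sequences of variables from $V$. A solution is a map $d$ with $d(v)\in\mathit{dom}(v)$ for all $v\in V$ and $(d(v_1),\dots,d(v_n))\in C$ for every constraint $C\in\mathcal{C}$ on $(v_1,\dots,v_n)$. Two CSPs with the same variables are equivalent if they have the same solutions. A (CSP) propagator is a function mapping CSPs to equivalent CSPs; it is domain reducing if it keeps the set of constraints unchanged and satisfies $\mathit{dom}_2(v)\subseteq \mathit{dom}_1(v)$ for all $v$, where $\mathit{dom}_1,\mathit{dom}_2$ are the domain maps of input and output. CSP of $\langle T,\tilde I\rangle$ for finite $\tilde I$ with domain $D$: $V_{\tilde I}$ is the set of all domain atoms $P(\overline{d})$ with $P/n\in\Sigma$, $\overline{d}\in D^n$, with a fixed total order (the $i$th domain atom). $\mathit{dom}_{\tilde I}(P(\overline{d}))$ is $\{\mathbf{t},\mathbf{f}\}$, $\{\mathbf{t}\}$, $\{\mathbf{f}\}$, $\emptyset$ according as $P^{\tilde I}(\overline{d})$ is $\mathbf{u},\mathbf{t},\mathbf{f},\mathbf{i}$.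 For $\overline{\tau}\in\{\mathbf{t},\mathbf{f}\}^{|V_{\tilde I}|}$, $I_{\overline{\tau}}$ is the two-valued $\Sigma$-structure with domain $D$ in which the $i$th domain atom is true iff the $i$th entry of $\overline{\tau}$ is $\mathbf{t}$. $C_T$ is the constraint on the whole sequence of domain atoms consisting of all $\overline{\tau}$ with $I_{\overline{\tau}}\models T$. *)

theory Defs
  imports Main
begin

datatype tv = TT | FF | UU | II   (* true, false, unknown, inconsistent *)

definition leq_p :: "tv \<Rightarrow> tv \<Rightarrow> bool" where
  "leq_p a b \<longleftrightarrow> a = b \<or> a = UU \<or> b = II"

text \<open>Function-free: terms are variables only (no function or constant symbols).\<close>
datatype 'p fm = Atom 'p "nat list" | Eq nat nat | Neg "'p fm" | Conj "'p fm" "'p fm" | Ex nat "'p fm"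

fun sat :: "('p \<Rightarrow> 'd list \<Rightarrow> bool) \<Rightarrow> 'd set \<Rightarrow> (nat \<Rightarrow> 'd) \<Rightarrow> 'p fm \<Rightarrow> bool" where
  "sat I D e (Atom P xs) = I P (map e xs)"
| "sat I D e (Eq x y) = (e x = e y)"
| "sat I D e (Neg \<phi>) = (\<not> sat I D e \<phi>)"
| "sat I D e (Conj \<phi> \<psi>) = (sat I D e \<phi> \<and> sat I D e \<psi>)"
| "sat I D e (Ex x \<phi>) = (\<exists>d\<in>D. sat I D (e(x := d)) \<phi>)"

fun fv :: "'p fm \<Rightarrow> nat set" where
  "fv (Atom P xs) = set xs"
| "fv (Eq x y) = {x, y}"
| "fv (Neg \<phi>) = fv \<phi>"
| "fv (Conj \<phi> \<psi>) = fv \<phi> \<union> fv \<psi>"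
| "fv (Ex x \<phi>) = fv \<phi> - {x}"

fun over_voc :: "'p set \<Rightarrow> ('p \<Rightarrow> nat) \<Rightarrow> 'p fm \<Rightarrow> bool" where
  "over_voc S ar (Atom P xs) = (P \<in> S \<and> length xs = ar P)"
| "over_voc S ar (Eq x y) = True"
| "over_voc S ar (Neg \<phi>) = over_voc S ar \<phi>"
| "over_voc S ar (Conj \<phi> \<psi>) = (over_voc S ar \<phi> \<and> over_voc S ar \<psi>)"
| "over_voc S ar (Ex x \<phi>) = over_voc S ar \<phi>"

definition theory_over :: "'p set \<Rightarrow> ('p \<Rightarrow> nat) \<Rightarrow> 'p fm set \<Rightarrow> bool" where
  "theory_over S ar T \<longleftrightarrow> (\<forall>\<phi>\<in>T. fv \<phi> = {} \<and> over_voc S ar \<phi>)"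

definition models :: "'d set \<Rightarrow> ('p \<Rightarrow> 'd list \<Rightarrow> bool) \<Rightarrow> 'p fm set \<Rightarrow> bool" where
  "models D I T \<longleftrightarrow> (\<forall>\<phi>\<in>T. \<forall>e. range e \<subseteq> D \<longrightarrow> sat I D e \<phi>)"

definition dom_atoms :: "'p set \<Rightarrow> ('p \<Rightarrow> nat) \<Rightarrow> 'd set \<Rightarrow> ('p \<times> 'd list) set" where
  "dom_atoms S ar D = {(P, ds). P \<in> S \<and> length ds = ar P \<and> set ds \<subseteq> D}"

type_synonym ('p, 'd) struct4 = "'d set \<times> ('p \<Rightarrow> 'd list \<Rightarrow> tv)"

text \<open>The interpretation function is canonically UU outside the domain atoms, so that
  a structure is determined by its domain and its values on domain atoms.\<close>
definition is_struct4 :: "'p set \<Rightarrow> ('p \<Rightarrow> nat) \<Rightarrow> ('p, 'd) struct4 \<Rightarrow> bool" where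
  "is_struct4 S ar A \<longleftrightarrow> fst A \<noteq> {} \<and>
     (\<forall>P ds. (P, ds) \<notin> dom_atoms S ar (fst A) \<longrightarrow> snd A P ds = UU)"

definition two_valued :: "'p set \<Rightarrow> ('p \<Rightarrow> nat) \<Rightarrow> ('p, 'd) struct4 \<Rightarrow> bool" where
  "two_valued S ar A \<longleftrightarrow>
     (\<forall>(P, ds) \<in> dom_atoms S ar (fst A). snd A P ds \<in> {TT, FF})"

definition leq_p_struct :: "'p set \<Rightarrow> ('p \<Rightarrow> nat) \<Rightarrow> ('p, 'd) struct4 \<Rightarrow> ('p, 'd) struct4 \<Rightarrow> bool" where
  "leq_p_struct S ar A B \<longleftrightarrow> fst A = fst B \<and>
     (\<forall>(P, ds) \<in> dom_atoms S ar (fst A). leq_p (snd A P ds) (snd B P ds))"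

definition is_model4 :: "'p set \<Rightarrow> ('p \<Rightarrow> nat) \<Rightarrow> 'p fm set \<Rightarrow> ('p, 'd) struct4 \<Rightarrow> bool" where
  "is_model4 S ar T M \<longleftrightarrow> is_struct4 S ar M \<and> two_valued S ar M \<and>
     models (fst M) (\<lambda>P ds. snd M P ds = TT) T"

definition propagator :: "'p set \<Rightarrow> ('p \<Rightarrow> nat) \<Rightarrow> 'p fm set \<Rightarrow>
    (('p, 'd) struct4 \<Rightarrow> ('p, 'd) struct4) \<Rightarrow> bool" where
  "propagator S ar T Op \<longleftrightarrow> (\<forall>A. is_struct4 S ar A \<longrightarrow>
      is_struct4 S ar (Op A) \<and> leq_p_struct S ar A (Op A) \<and>
      (\<forall>M. is_model4 S ar T M \<and> leq_p_struct S ar A M \<longrightarrow> leq_p_struct S ar (Op A) M))"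

text \<open>A CSP: set of constraints (variable sequence, set of tuples), set of variables, domain map.\<close>
type_synonym ('v, 'a) csp = "('v list \<times> 'a list set) set \<times> 'v set \<times> ('v \<Rightarrow> 'a set)"

definition csp_cons :: "('v, 'a) csp \<Rightarrow> ('v list \<times> 'a list set) set" where "csp_cons X = fst X"
definition csp_vars :: "('v, 'a) csp \<Rightarrow> 'v set" where "csp_vars X = fst (snd X)"
definition csp_dom :: "('v, 'a) csp \<Rightarrow> 'v \<Rightarrow> 'a set" where "csp_dom X = snd (snd X)"

definition csp_solutions :: "('v, 'a) csp \<Rightarrow> ('v \<Rightarrow> 'a) set" where
  "csp_solutions X = {d. (\<forall>v\<in>csp_vars X. d v \<in> csp_dom X v) \<and>
      (\<forall>(vs, C)\<in>csp_cons X. map d vs \<in> C)}"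

definition csp_equiv :: "('v, 'a) csp \<Rightarrow> ('v, 'a) csp \<Rightarrow> bool" where
  "csp_equiv X Y \<longleftrightarrow> csp_vars X = csp_vars Y \<and> csp_solutions X = csp_solutions Y"

definition domain_reducing_propagator_on :: "('v, 'a) csp set \<Rightarrow> (('v, 'a) csp \<Rightarrow> ('v, 'a) csp) \<Rightarrow> bool" where
  "domain_reducing_propagator_on K f \<longleftrightarrow> (\<forall>X\<in>K. csp_equiv X (f X) \<and>
      csp_cons (f X) = csp_cons X \<and> (\<forall>v\<in>csp_vars X. csp_dom (f X) v \<subseteq> csp_dom X v))"

text \<open>ord is the fixed enumeration (total order) of the domain atoms.\<close>
definition I_tau :: "('p \<times> 'd list) list \<Rightarrow> tv list \<Rightarrow> 'p \<Rightarrow> 'd list \<Rightarrow> bool" where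
  "I_tau ord \<tau> P ds \<longleftrightarrow> (\<exists>i<length ord. ord ! i = (P, ds) \<and> \<tau> ! i = TT)"

definition C_T :: "'d set \<Rightarrow> ('p \<times> 'd list) list \<Rightarrow> 'p fm set \<Rightarrow> tv list set" where
  "C_T D ord T = {\<tau>. length \<tau> = length ord \<and> set \<tau> \<subseteq> {TT, FF} \<and> models D (I_tau ord \<tau>) T}"

definition dom_of :: "tv \<Rightarrow> tv set" where
  "dom_of v = (case v of UU \<Rightarrow> {TT, FF} | TT \<Rightarrow> {TT} | FF \<Rightarrow> {FF} | II \<Rightarrow> {})"

definition csp_of :: "'p set \<Rightarrow> ('p \<Rightarrow> nat) \<Rightarrow> ('p \<times> 'd list) list \<Rightarrow> 'p fm set \<Rightarrow>
    ('p, 'd) struct4 \<Rightarrow> ('p \<times> 'd list, tv) csp" where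
  "csp_of S ar ord T A = ({(ord, C_T (fst A) ord T)}, dom_atoms S ar (fst A),
      (\<lambda>(P, ds). dom_of (snd A P ds)))"

definition csp_class :: "'p set \<Rightarrow> ('p \<Rightarrow> nat) \<Rightarrow> ('p \<times> 'd list) list \<Rightarrow> 'p fm set \<Rightarrow>
    'd set \<Rightarrow> ('p \<times> 'd list, tv) csp set" where
  "csp_class S ar ord T D = {csp_of S ar ord T A | A. is_struct4 S ar A \<and> fst A = D}"

definition f_op :: "'p set \<Rightarrow> ('p \<Rightarrow> nat) \<Rightarrow> ('p \<times> 'd list) list \<Rightarrow> 'p fm set \<Rightarrow> 'd set \<Rightarrow>
    (('p, 'd) struct4 \<Rightarrow> ('p, 'd) struct4) \<Rightarrow> ('p \<times> 'd list, tv) csp \<Rightarrow> ('p \<times> 'd list, tv) csp" where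
  "f_op S ar ord T D Op X = csp_of S ar ord T
      (Op (SOME A. is_struct4 S ar A \<and> fst A = D \<and> csp_of S ar ord T A = X))"

end

theory Submission
  imports Defs
begin

text \<open>A solution of the CSP of \<open>\<tilde>I\<close> is exactly a two-valued structure \<open>M \<ge>\<^sub>p \<tilde>I\<close> that
  models \<open>T\<close>. Since \<open>O\<close> never excludes such models, the CSP of \<open>O(\<tilde>I)\<close> has the same
  solutions, and \<open>\<tilde>I \<le>\<^sub>p O(\<tilde>I)\<close> makes its domains smaller. Finally, \<open>f\<close> is well defined
  because a structure is recovered from its CSP.\<close>

lemma inj_dom_of: "inj dom_of"
proof (rule injI)
  fix a b show "dom_of a = dom_of b \<Longrightarrow> a = b"
    by (cases a; cases b; simp add: dom_of_def)
qed

lemma dom_of_subset_TT_FF: "dom_of a \<subseteq> {TT, FF}"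
  by (cases a; auto simp: dom_of_def)

lemma leq_p_imp_dom_of_subset: "leq_p a b \<Longrightarrow> dom_of b \<subseteq> dom_of a"
  by (cases a; cases b; auto simp: leq_p_def dom_of_def)

lemma leq_p_two_valued_iff_mem_dom_of: "x \<in> {TT, FF} \<Longrightarrow> leq_p a x \<longleftrightarrow> x \<in> dom_of a"
  by (cases a; cases x; auto simp: leq_p_def dom_of_def)

lemma csp_of_components:
  "csp_cons (csp_of S ar ord T A) = {(ord, C_T (fst A) ord T)}"
  "csp_vars (csp_of S ar ord T A) = dom_atoms S ar (fst A)"
  "csp_dom (csp_of S ar ord T A) (P, ds) = dom_of (snd A P ds)"
  by (simp_all add: csp_of_def csp_cons_def csp_vars_def csp_dom_def)

lemma csp_of_inj:
  assumes "is_struct4 S ar A" "is_struct4 S ar B" "fst A = fst B"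
    and "csp_of S ar ord T A = csp_of S ar ord T B"
  shows "A = B"
proof -
  have "dom_of (snd A P ds) = dom_of (snd B P ds)" for P ds
    using arg_cong[OF assms(4), of "\<lambda>X. csp_dom X (P, ds)"] by (simp add: csp_of_components)
  then have "snd A = snd B"
    using injD[OF inj_dom_of] by blast
  with assms(3) show ?thesis
    by (simp add: prod_eq_iff)
qed

lemma f_op_csp_of:
  assumes "is_struct4 S ar A" "fst A = D"
  shows "f_op S ar ord T D Op (csp_of S ar ord T A) = csp_of S ar ord T (Op A)"
proof -
  let ?R = "\<lambda>B. is_struct4 S ar B \<and> fst B = D \<and> csp_of S ar ord T B = csp_of S ar ord T A"
  have "(SOME B. ?R B) = A"
  proof (rule some_equality)
    show "?R A"
      using assms by simp
    show "B = A" if "?R B" for B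
      using csp_of_inj[of S ar B A ord T] that assms by simp
  qed
  then show ?thesis
    by (simp add: f_op_def)
qed

lemma csp_solutions_csp_of:
  "d \<in> csp_solutions (csp_of S ar ord T A) \<longleftrightarrow>
     (\<forall>(P, ds) \<in> dom_atoms S ar (fst A). d (P, ds) \<in> dom_of (snd A P ds))
     \<and> map d ord \<in> C_T (fst A) ord T"
  by (auto simp: csp_solutions_def csp_of_components split: prod.splits)

definition struct_of_assignment :: "'p set \<Rightarrow> ('p \<Rightarrow> nat) \<Rightarrow> 'd set \<Rightarrow>
    ('p \<times> 'd list \<Rightarrow> tv) \<Rightarrow> ('p, 'd) struct4" where
  "struct_of_assignment S ar D d = (D, \<lambda>P ds. if (P, ds) \<in> dom_atoms S ar D then d (P, ds) else UU)"

lemma I_tau_map_eq_struct_of_assignment: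
  assumes "set ord = dom_atoms S ar D"
  shows "I_tau ord (map d ord) = (\<lambda>P ds. snd (struct_of_assignment S ar D d) P ds = TT)"
proof (intro ext)
  fix P ds
  have "I_tau ord (map d ord) P ds \<longleftrightarrow> (P, ds) \<in> set ord \<and> d (P, ds) = TT"
    unfolding I_tau_def by (auto simp: in_set_conv_nth)
  then show "I_tau ord (map d ord) P ds = (snd (struct_of_assignment S ar D d) P ds = TT)"
    by (simp add: struct_of_assignment_def assms)
qed

lemma is_model4_struct_of_assignment:
  assumes "D \<noteq> {}" "set ord = dom_atoms S ar D"
    and "\<forall>v \<in> dom_atoms S ar D. d v \<in> {TT, FF}"
    and "map d ord \<in> C_T D ord T"
  shows "is_model4 S ar T (struct_of_assignment S ar D d)"
  using assms I_tau_map_eq_struct_of_assignment[OF assms(2), of d]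
  by (auto simp: is_model4_def is_struct4_def two_valued_def struct_of_assignment_def C_T_def)

lemma leq_p_struct_struct_of_assignment_iff:
  assumes "fst A = D" "\<forall>v \<in> dom_atoms S ar D. d v \<in> {TT, FF}"
  shows "leq_p_struct S ar A (struct_of_assignment S ar D d) \<longleftrightarrow>
           (\<forall>(P, ds) \<in> dom_atoms S ar D. d (P, ds) \<in> dom_of (snd A P ds))"
  using assms leq_p_two_valued_iff_mem_dom_of
  by (fastforce simp: leq_p_struct_def struct_of_assignment_def)

lemma csp_of_dom_subset_if_leq_p_struct:
  assumes "leq_p_struct S ar A B" "v \<in> dom_atoms S ar (fst A)"
  shows "csp_dom (csp_of S ar ord T B) v \<subseteq> csp_dom (csp_of S ar ord T A) v"
  using assms leq_p_imp_dom_of_subset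
  by (cases v) (fastforce simp: leq_p_struct_def csp_of_components)

lemma csp_solutions_antimono_leq_p_struct:
  assumes "leq_p_struct S ar A B"
  shows "csp_solutions (csp_of S ar ord T B) \<subseteq> csp_solutions (csp_of S ar ord T A)"
  using assms csp_of_dom_subset_if_leq_p_struct[OF assms]
  by (fastforce simp: leq_p_struct_def csp_solutions_def csp_of_components)

lemma propagator_leq_p_struct:
  "propagator S ar T Op \<Longrightarrow> is_struct4 S ar A \<Longrightarrow> leq_p_struct S ar A (Op A)"
  unfolding propagator_def by blast

lemma propagator_below_model:
  "propagator S ar T Op \<Longrightarrow> is_struct4 S ar A \<Longrightarrow> is_model4 S ar T M \<Longrightarrow>
     leq_p_struct S ar A M \<Longrightarrow> leq_p_struct S ar (Op A) M"
  unfolding propagator_def by blast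

lemma propagator_preserves_csp_solutions:
  assumes hprop: "propagator S ar T Op" and A: "is_struct4 S ar A"
    and ord: "set ord = dom_atoms S ar (fst A)"
  shows "csp_solutions (csp_of S ar ord T (Op A)) = csp_solutions (csp_of S ar ord T A)"
proof
  have A_leq: "leq_p_struct S ar A (Op A)"
    using hprop A by (rule propagator_leq_p_struct)
  then show "csp_solutions (csp_of S ar ord T (Op A)) \<subseteq> csp_solutions (csp_of S ar ord T A)"
    by (rule csp_solutions_antimono_leq_p_struct)
  have same_dom: "fst (Op A) = fst A"
    using A_leq by (simp add: leq_p_struct_def)
  show "csp_solutions (csp_of S ar ord T A) \<subseteq> csp_solutions (csp_of S ar ord T (Op A))"
  proof
    fix d assume sol: "d \<in> csp_solutions (csp_of S ar ord T A)"
    define M where "M = struct_of_assignment S ar (fst A) d"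
    from sol have in_dom: "\<forall>(P, ds) \<in> dom_atoms S ar (fst A). d (P, ds) \<in> dom_of (snd A P ds)"
      and in_C: "map d ord \<in> C_T (fst A) ord T"
      by (simp_all add: csp_solutions_csp_of)
    have two_valued: "\<forall>v \<in> dom_atoms S ar (fst A). d v \<in> {TT, FF}"
      using in_dom dom_of_subset_TT_FF by fast
    have "is_model4 S ar T M"
      unfolding M_def using A ord two_valued in_C
      by (intro is_model4_struct_of_assignment) (simp_all add: is_struct4_def)
    moreover have "leq_p_struct S ar A M"
      unfolding M_def using leq_p_struct_struct_of_assignment_iff two_valued in_dom by blast
    ultimately have "leq_p_struct S ar (Op A) M"
      by (rule propagator_below_model[OF hprop A])
    then have "\<forall>(P, ds) \<in> dom_atoms S ar (fst A). d (P, ds) \<in> dom_of (snd (Op A) P ds)"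
      unfolding M_def using leq_p_struct_struct_of_assignment_iff same_dom two_valued by blast
    with in_C same_dom show "d \<in> csp_solutions (csp_of S ar ord T (Op A))"
      by (simp add: csp_solutions_csp_of)
  qed
qed

theorem proposition3p1:
  fixes S :: "'p set" and ar :: "'p \<Rightarrow> nat" and T :: "'p fm set"
    and Op :: "('p, 'd) struct4 \<Rightarrow> ('p, 'd) struct4"
    and D :: "'d set" and ord :: "('p \<times> 'd list) list"
  assumes "finite S"
    and "theory_over S ar T"
    and hprop: "propagator S ar T Op"
    and "finite D"
    and "distinct ord" and ord: "set ord = dom_atoms S ar D"
  shows "(\<forall>A. is_struct4 S ar A \<and> fst A = D \<longrightarrow>
            f_op S ar ord T D Op (csp_of S ar ord T A) = csp_of S ar ord T (Op A))
       \<and> domain_reducing_propagator_on (csp_class S ar ord T D) (f_op S ar ord T D Op)"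
proof -
  have "csp_equiv X (f_op S ar ord T D Op X) \<and> csp_cons (f_op S ar ord T D Op X) = csp_cons X
        \<and> (\<forall>v \<in> csp_vars X. csp_dom (f_op S ar ord T D Op X) v \<subseteq> csp_dom X v)"
    if "X \<in> csp_class S ar ord T D" for X
  proof -
    from that obtain A where A: "is_struct4 S ar A" "fst A = D" and X: "X = csp_of S ar ord T A"
      by (auto simp: csp_class_def)
    have A_leq: "leq_p_struct S ar A (Op A)"
      using hprop A(1) by (rule propagator_leq_p_struct)
    then have "fst (Op A) = fst A"
      by (simp add: leq_p_struct_def)
    then show ?thesis
      using propagator_preserves_csp_solutions[OF hprop A(1)] csp_of_dom_subset_if_leq_p_struct[OF A_leq]
      by (simp add: X f_op_csp_of[OF A] csp_equiv_def csp_of_components A(2) ord)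
  qed
  then show ?thesis
    unfolding domain_reducing_propagator_on_def using f_op_csp_of by blast
qed

end
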